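(* All $(\mathfrak g,K)$-modules $\mathfrak F_\beta$ with $\beta\in\mathbb C$, $\beta\ne0$, are isomorphic.
   Context: $G=\mathrm{SU}(2,1)=\{g\in\mathrm{SL}_3(\mathbb C):\bar g^t\,\mathrm{diag}(1,1,-1)\,g=\mathrm{diag}(1,1,-1)\}$ with maximal compact subgroup $K$ (the block-diagonal elements with blocks of sizes $2,1$) and unipotent subgroup $N=\{n(b,r)=\begin{pmatrix}1+ir-\frac{|b|^2}2&b&-ir+\frac{|b|^2}2\\-\bar b&1&\bar b\\ ir-\frac{|b|^2}2&b&1-ir+\frac{|b|^2}2\end{pmatrix}:b\in\mathbb C,r\in\mathbb R\}$. $\chi_\beta(n(b,r))=e^{2\pi i\,\mathrm{Re}(\bar\beta b)}$. $\mathfrak F_\beta$ is the space of smooth right-$K$-finite functions $F$ on $G$ with $F(ng)=\chi_\beta(n)F(g)$ for $n\in N$, $g\in G$, a $(\mathfrak g,K)$-module under right translation by $K$ and right differentiation by the Lie algebra $\mathfrak g$ of $G$. *)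

theory Defs
  imports "HOL-Analysis.Analysis"
begin

type_synonym mat3 = "complex^3^3"

definition idx3 :: "3 \<Rightarrow> nat" where
  "idx3 i = (if i = 1 then 0 else if i = 2 then 1 else 2)"

definition m3 :: "complex list list \<Rightarrow> mat3" where
  "m3 xs = (\<chi> i j. xs ! idx3 i ! idx3 j)"

definition Jmat :: mat3 where
  "Jmat = m3 [[1,0,0],[0,1,0],[0,0,-1]]"

definition conj_transpose :: "mat3 \<Rightarrow> mat3" where
  "conj_transpose g = (\<chi> i j. cnj (g $ j $ i))"

definition mtrace :: "mat3 \<Rightarrow> complex" where
  "mtrace X = X $ 1 $ 1 + X $ 2 $ 2 + X $ 3 $ 3"

definition SU21 :: "mat3 set" where
  "SU21 = {g. det g = 1 \<and> conj_transpose g ** Jmat ** g = Jmat}"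

definition Kgrp :: "mat3 set" where
  "Kgrp = {g \<in> SU21. g $ 1 $ 3 = 0 \<and> g $ 2 $ 3 = 0 \<and> g $ 3 $ 1 = 0 \<and> g $ 3 $ 2 = 0}"

definition lie_g :: "mat3 set" where
  "lie_g = {X. mtrace X = 0 \<and> conj_transpose X ** Jmat + Jmat ** X = 0}"

definition nmat :: "complex \<Rightarrow> real \<Rightarrow> mat3" where
  "nmat b r = m3
     [[1 + \<i> * r - (cmod b)\<^sup>2 / 2, b, - \<i> * r + (cmod b)\<^sup>2 / 2],
      [- cnj b, 1, cnj b],
      [\<i> * r - (cmod b)\<^sup>2 / 2, b, 1 - \<i> * r + (cmod b)\<^sup>2 / 2]]"

definition chi :: "complex \<Rightarrow> complex \<Rightarrow> real \<Rightarrow> complex" where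
  "chi \<beta> b r = exp (2 * pi * \<i> * complex_of_real (Re (cnj \<beta> * b)))"

definition mpow :: "mat3 \<Rightarrow> nat \<Rightarrow> mat3" where
  "mpow X k = ((\<lambda>Y. Y ** X) ^^ k) (mat 1)"

definition mexp :: "mat3 \<Rightarrow> mat3" where
  "mexp X = (\<Sum>k. (1 / fact k) *\<^sub>R mpow X k)"

text \<open>functions on G are represented as functions on matrices vanishing off G\<close>

definition rdiff :: "mat3 \<Rightarrow> (mat3 \<Rightarrow> complex) \<Rightarrow> (mat3 \<Rightarrow> complex)" where
  "rdiff X F = (\<lambda>g. if g \<in> SU21
       then vector_derivative (\<lambda>t::real. F (g ** mexp (t *\<^sub>R X))) (at 0) else 0)"

definition rtrans :: "mat3 \<Rightarrow> (mat3 \<Rightarrow> complex) \<Rightarrow> (mat3 \<Rightarrow> complex)" where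
  "rtrans k F = (\<lambda>g. if g \<in> SU21 then F (g ** k) else 0)"

definition iter_rdiff :: "mat3 list \<Rightarrow> (mat3 \<Rightarrow> complex) \<Rightarrow> (mat3 \<Rightarrow> complex)" where
  "iter_rdiff Xs F = foldr rdiff Xs F"

definition smooth_on_G :: "(mat3 \<Rightarrow> complex) \<Rightarrow> bool" where
  "smooth_on_G F \<longleftrightarrow> (\<forall>Xs. set Xs \<subseteq> lie_g \<longrightarrow>
      continuous_on SU21 (iter_rdiff Xs F) \<and>
      (\<forall>X\<in>lie_g. \<forall>g\<in>SU21.
         (\<lambda>t::real. iter_rdiff Xs F (g ** mexp (t *\<^sub>R X))) differentiable (at 0)))"

definition cspan :: "(mat3 \<Rightarrow> complex) set \<Rightarrow> (mat3 \<Rightarrow> complex) set" where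
  "cspan S = {(\<lambda>g. \<Sum>f\<in>S. c f * f g) | c. True}"

definition K_finite :: "(mat3 \<Rightarrow> complex) \<Rightarrow> bool" where
  "K_finite F \<longleftrightarrow> (\<exists>S. finite S \<and> (\<forall>k\<in>Kgrp. rtrans k F \<in> cspan S))"

definition Fspace :: "complex \<Rightarrow> (mat3 \<Rightarrow> complex) set" where
  "Fspace \<beta> = {F. (\<forall>g. g \<notin> SU21 \<longrightarrow> F g = 0) \<and> smooth_on_G F \<and> K_finite F \<and>
      (\<forall>b r g. g \<in> SU21 \<longrightarrow> F (nmat b r ** g) = chi \<beta> b r * F g)}"

definition gK_iso :: "complex \<Rightarrow> complex \<Rightarrow> ((mat3 \<Rightarrow> complex) \<Rightarrow> (mat3 \<Rightarrow> complex)) \<Rightarrow> bool" where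
  "gK_iso \<beta> \<beta>' \<Phi> \<longleftrightarrow> bij_betw \<Phi> (Fspace \<beta>) (Fspace \<beta>') \<and>
     (\<forall>F\<in>Fspace \<beta>. \<forall>H\<in>Fspace \<beta>. \<forall>a::complex.
        \<Phi> (\<lambda>g. a * F g + H g) = (\<lambda>g. a * \<Phi> F g + \<Phi> H g)) \<and>
     (\<forall>k\<in>Kgrp. \<forall>F\<in>Fspace \<beta>. \<Phi> (rtrans k F) = rtrans k (\<Phi> F)) \<and>
     (\<forall>X\<in>lie_g. \<forall>F\<in>Fspace \<beta>. \<Phi> (rdiff X F) = rdiff X (\<Phi> F))"

end

theory Submission
  imports Defs
begin

text \<open>Conjugation by \<open>h = a\<^sub>\<rho> m\<^sub>\<omega>\<close> (\<open>\<rho> > 0\<close>, \<open>|\<omega>| = 1\<close>) from the subgroup \<open>MA\<close> of \<open>G\<close>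
  normalizes \<open>N\<close>, acting by \<open>n(b,r) \<mapsto> n(\<rho>\<omega>\<^sup>3b, \<rho>\<^sup>2r)\<close>. So left translation \<open>F \<mapsto> F(h \<cdot>)\<close>,
  which commutes with the right actions of \<open>K\<close> and of the Lie algebra, maps \<open>F\<^sub>\<beta>\<close>
  bijectively onto \<open>F\<^sub>\<beta>\<^sub>'\<close> as soon as \<open>cnj \<beta>' = \<rho>\<omega>\<^sup>3 cnj \<beta>\<close>; and every nonzero ratio
  \<open>cnj \<beta>' / cnj \<beta>\<close> can be written as \<open>\<rho>\<omega>\<^sup>3\<close>.\<close>

lemma idx3_simps [simp]: "idx3 1 = 0" "idx3 2 = 1" "idx3 3 = 2"
  by (auto simp: idx3_def)

lemma m3_nth [simp]: "m3 xs $ i $ j = xs ! idx3 i ! idx3 j"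
  by (simp add: m3_def)

lemma mat3_eqI: "(\<And>i j. i \<in> {1,2,3} \<Longrightarrow> j \<in> {1,2,3} \<Longrightarrow> A $ i $ j = B $ i $ j) \<Longrightarrow> A = (B::mat3)"
  by (metis UNIV_3 UNIV_I vec_eq_iff)

lemma matrix_mult_mat3_nth:
  "((A::mat3) ** B) $ i $ j = A$i$1 * B$1$j + A$i$2 * B$2$j + A$i$3 * B$3$j"
  by (simp add: matrix_matrix_mult_def sum_3)

lemma conj_transpose_mult: "conj_transpose (A ** B) = conj_transpose B ** conj_transpose A"
  by (simp add: conj_transpose_def vec_eq_iff matrix_matrix_mult_def mult.commute)

lemma conj_transpose_conj_transpose [simp]: "conj_transpose (conj_transpose A) = A"
  by (simp add: conj_transpose_def vec_eq_iff)

lemma det_conj_transpose: "det (conj_transpose A) = cnj (det A)"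
  by (simp add: det_3 conj_transpose_def algebra_simps)

lemma conj_transpose_Jmat [simp]: "conj_transpose Jmat = Jmat"
  by (rule mat3_eqI) (auto simp: conj_transpose_def Jmat_def)

lemma Jmat_mult_Jmat [simp]: "Jmat ** Jmat = mat 1"
  by (rule mat3_eqI) (auto simp: matrix_mult_mat3_nth Jmat_def mat_def)

lemma mult_Jmat_Jmat [simp]: "A ** Jmat ** Jmat = A"
  by (metis Jmat_mult_Jmat matrix_mul_assoc matrix_mul_rid)

lemma det_Jmat [simp]: "det Jmat = -1"
  by (simp add: det_3 Jmat_def)

definition SU21_inv :: "mat3 \<Rightarrow> mat3" where
  "SU21_inv g = Jmat ** conj_transpose g ** Jmat"

lemma SU21_inv_mult:
  assumes "g \<in> SU21" shows "SU21_inv g ** g = mat 1"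
proof -
  have "SU21_inv g ** g = Jmat ** (conj_transpose g ** Jmat ** g)"
    by (simp add: SU21_inv_def matrix_mul_assoc)
  then show ?thesis using assms by (simp add: SU21_def)
qed

lemma mult_SU21_inv: "g \<in> SU21 \<Longrightarrow> g ** SU21_inv g = mat 1"
  using SU21_inv_mult matrix_left_right_inverse by blast

lemma SU21_inv_in_SU21:
  assumes "g \<in> SU21" shows "SU21_inv g \<in> SU21"
proof -
  have "det (SU21_inv g) = 1"
    using assms by (simp add: SU21_inv_def SU21_def det_mul det_conj_transpose)
  moreover have "conj_transpose (SU21_inv g) ** Jmat ** SU21_inv g = Jmat ** (g ** SU21_inv g)"
    by (simp add: SU21_inv_def conj_transpose_mult matrix_mul_assoc)
  ultimately show ?thesis using assms by (simp add: SU21_def mult_SU21_inv)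
qed

lemma SU21_mult_closed: "h \<in> SU21 \<Longrightarrow> g \<in> SU21 \<Longrightarrow> h ** g \<in> SU21"
  unfolding SU21_def by (auto simp: det_mul conj_transpose_mult matrix_mul_assoc)
     (metis matrix_mul_assoc)

lemma SU21_left_mult_iff:
  assumes "h \<in> SU21" shows "h ** g \<in> SU21 \<longleftrightarrow> g \<in> SU21"
proof
  assume "h ** g \<in> SU21"
  then have "SU21_inv h ** (h ** g) \<in> SU21"
    using SU21_mult_closed SU21_inv_in_SU21 assms by blast
  then show "g \<in> SU21" using assms by (metis SU21_inv_mult matrix_mul_assoc matrix_mul_lid)
qed (use SU21_mult_closed assms in blast)

definition ltrans :: "mat3 \<Rightarrow> (mat3 \<Rightarrow> complex) \<Rightarrow> (mat3 \<Rightarrow> complex)" where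
  "ltrans h F = (\<lambda>g. F (h ** g))"

lemma ltrans_ltrans: "ltrans a (ltrans b F) = ltrans (b ** a) F"
  by (simp add: ltrans_def fun_eq_iff matrix_mul_assoc)

lemma ltrans_mat_1 [simp]: "ltrans (mat 1) F = F"
  by (simp add: ltrans_def fun_eq_iff)

lemma rdiff_ltrans: "h \<in> SU21 \<Longrightarrow> rdiff X (ltrans h F) = ltrans h (rdiff X F)"
  by (simp add: rdiff_def ltrans_def fun_eq_iff SU21_left_mult_iff matrix_mul_assoc)

lemma rtrans_ltrans: "h \<in> SU21 \<Longrightarrow> rtrans k (ltrans h F) = ltrans h (rtrans k F)"
  by (simp add: rtrans_def ltrans_def fun_eq_iff SU21_left_mult_iff matrix_mul_assoc)

lemma iter_rdiff_ltrans: "h \<in> SU21 \<Longrightarrow> iter_rdiff Xs (ltrans h F) = ltrans h (iter_rdiff Xs F)"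
  by (induction Xs) (simp_all add: iter_rdiff_def rdiff_ltrans)

lemma smooth_on_G_ltrans:
  assumes h: "h \<in> SU21" and F: "smooth_on_G F"
  shows "smooth_on_G (ltrans h F)"
  unfolding smooth_on_G_def
proof (intro allI impI conjI ballI)
  fix Xs assume Xs: "set Xs \<subseteq> lie_g"
  have "continuous_on SU21 (iter_rdiff Xs F)"
    using F Xs by (simp add: smooth_on_G_def)
  moreover have "continuous_on SU21 (\<lambda>g. h ** g)"
    unfolding matrix_matrix_mult_def by (intro continuous_intros)
  moreover have "(\<lambda>g. h ** g) ` SU21 \<subseteq> SU21"
    using h SU21_mult_closed by blast
  ultimately have "continuous_on SU21 (\<lambda>g. iter_rdiff Xs F (h ** g))"
    by (rule continuous_on_compose2)
  then show "continuous_on SU21 (iter_rdiff Xs (ltrans h F))"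
    unfolding iter_rdiff_ltrans[OF h] by (simp add: ltrans_def)
  fix X g assume "X \<in> lie_g" "g \<in> SU21"
  then have "(\<lambda>t. iter_rdiff Xs F ((h ** g) ** mexp (t *\<^sub>R X))) differentiable at 0"
    using F Xs h SU21_mult_closed by (simp add: smooth_on_G_def)
  then show "(\<lambda>t. iter_rdiff Xs (ltrans h F) (g ** mexp (t *\<^sub>R X))) differentiable at 0"
    unfolding iter_rdiff_ltrans[OF h] by (simp add: ltrans_def matrix_mul_assoc)
qed

lemma cspan_comp:
  assumes "finite S" and "G \<in> cspan S"
  shows "G \<circ> \<sigma> \<in> cspan ((\<lambda>f. f \<circ> \<sigma>) ` S)"
proof -
  obtain c where G: "G = (\<lambda>g. \<Sum>f\<in>S. c f * f g)"
    using assms(2) unfolding cspan_def by blast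
  define c' where "c' f' = (\<Sum>f\<in>{f\<in>S. f \<circ> \<sigma> = f'}. c f)" for f'
  have "(G \<circ> \<sigma>) x = (\<Sum>f'\<in>(\<lambda>f. f \<circ> \<sigma>) ` S. c' f' * f' x)" for x
  proof -
    have "(G \<circ> \<sigma>) x = (\<Sum>f\<in>S. c f * (f \<circ> \<sigma>) x)"
      by (simp add: G)
    also have "\<dots> = (\<Sum>f'\<in>(\<lambda>f. f \<circ> \<sigma>) ` S. \<Sum>f\<in>{f\<in>S. f \<circ> \<sigma> = f'}. c f * (f \<circ> \<sigma>) x)"
      using assms(1) by (rule sum.image_gen)
    also have "\<dots> = (\<Sum>f'\<in>(\<lambda>f. f \<circ> \<sigma>) ` S. \<Sum>f\<in>{f\<in>S. f \<circ> \<sigma> = f'}. c f * f' x)"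
      by (intro sum.cong refl) auto
    also have "\<dots> = (\<Sum>f'\<in>(\<lambda>f. f \<circ> \<sigma>) ` S. c' f' * f' x)"
      by (simp add: c'_def sum_distrib_right)
    finally show ?thesis .
  qed
  then show ?thesis unfolding cspan_def by blast
qed

lemma K_finite_ltrans:
  assumes h: "h \<in> SU21" and F: "K_finite F"
  shows "K_finite (ltrans h F)"
proof -
  obtain S where S: "finite S" "\<And>k. k \<in> Kgrp \<Longrightarrow> rtrans k F \<in> cspan S"
    using F unfolding K_finite_def by blast
  have "rtrans k (ltrans h F) \<in> cspan ((\<lambda>f. f \<circ> (\<lambda>g. h ** g)) ` S)" if "k \<in> Kgrp" for k
  proof -
    have "rtrans k (ltrans h F) = rtrans k F \<circ> (\<lambda>g. h ** g)"
      unfolding rtrans_ltrans[OF h] by (simp add: ltrans_def o_def)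
    then show ?thesis using cspan_comp[OF S(1) S(2)[OF that]] by simp
  qed
  then show ?thesis
    unfolding K_finite_def using S(1) by blast
qed

lemma ltrans_Fspace:
  assumes h: "h \<in> SU21" and F: "F \<in> Fspace \<beta>"
    and normalizes: "\<And>b r. h ** nmat b r = nmat (\<mu> * b) (s * r) ** h"
    and \<beta>': "cnj \<beta>' = cnj \<beta> * \<mu>"
  shows "ltrans h F \<in> Fspace \<beta>'"
proof -
  have F_equivariant: "F (nmat b r ** g) = chi \<beta> b r * F g" if "g \<in> SU21" for b r g
    using F that by (simp add: Fspace_def)
  have "ltrans h F (nmat b r ** g) = chi \<beta>' b r * ltrans h F g" if g: "g \<in> SU21" for b r g
  proof -
    have "ltrans h F (nmat b r ** g) = F (nmat (\<mu> * b) (s * r) ** (h ** g))"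
      by (simp add: ltrans_def matrix_mul_assoc normalizes)
    also have "\<dots> = chi \<beta> (\<mu> * b) (s * r) * ltrans h F g"
      using g h SU21_mult_closed F_equivariant by (simp add: ltrans_def)
    also have "chi \<beta> (\<mu> * b) (s * r) = chi \<beta>' b r"
      by (simp add: chi_def \<beta>' mult.assoc)
    finally show ?thesis .
  qed
  moreover have "ltrans h F g = 0" if "g \<notin> SU21" for g
    using F that h by (simp add: Fspace_def ltrans_def SU21_left_mult_iff)
  ultimately show ?thesis
    using F h smooth_on_G_ltrans K_finite_ltrans by (simp add: Fspace_def)
qed

lemma SU21_inv_normalizes:
  assumes h: "h \<in> SU21" and "\<mu> \<noteq> 0" "s \<noteq> 0"
    and normalizes: "\<And>b r. h ** nmat b r = nmat (\<mu> * b) (s * r) ** h"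
  shows "SU21_inv h ** nmat b r = nmat (b / \<mu>) (r / s) ** SU21_inv h"
proof -
  have "h ** nmat (b / \<mu>) (r / s) = nmat b r ** h"
    using normalizes[of "b / \<mu>" "r / s"] assms by simp
  then have "SU21_inv h ** (nmat b r ** h) ** SU21_inv h = nmat (b / \<mu>) (r / s) ** SU21_inv h"
    by (metis SU21_inv_mult h matrix_mul_assoc matrix_mul_lid)
  then show ?thesis
    by (metis h mult_SU21_inv matrix_mul_assoc matrix_mul_rid)
qed

lemma gK_iso_ltrans:
  assumes h: "h \<in> SU21" and "\<mu> \<noteq> 0" "s \<noteq> 0"
    and normalizes: "\<And>b r. h ** nmat b r = nmat (\<mu> * b) (s * r) ** h"
    and \<beta>': "cnj \<beta>' = cnj \<beta> * \<mu>"
  shows "gK_iso \<beta> \<beta>' (ltrans h)"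
  unfolding gK_iso_def
proof (intro conjI ballI allI)
  have "ltrans (SU21_inv h) F \<in> Fspace \<beta>" if "F \<in> Fspace \<beta>'" for F
  proof (rule ltrans_Fspace[OF SU21_inv_in_SU21[OF h] that])
    show "SU21_inv h ** nmat b r = nmat (inverse \<mu> * b) (inverse s * r) ** SU21_inv h" for b r
      using SU21_inv_normalizes[OF assms(1-4)] by (simp add: field_simps)
    show "cnj \<beta> = cnj \<beta>' * inverse \<mu>"
      using \<beta>' \<open>\<mu> \<noteq> 0\<close> by (simp add: field_simps)
  qed
  then show "bij_betw (ltrans h) (Fspace \<beta>) (Fspace \<beta>')"
    using ltrans_Fspace[OF h _ normalizes \<beta>']
    by (intro bij_betw_byWitness[where f' = "ltrans (SU21_inv h)"])
       (auto simp: ltrans_ltrans h SU21_inv_mult mult_SU21_inv)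
next
  fix F H :: "mat3 \<Rightarrow> complex" and a :: complex
  show "ltrans h (\<lambda>g. a * F g + H g) = (\<lambda>g. a * ltrans h F g + ltrans h H g)"
    by (simp add: ltrans_def)
qed (simp_all add: rtrans_ltrans[OF h] rdiff_ltrans[OF h])

text \<open>\<open>torus_elt \<rho> \<omega> = a\<^sub>\<rho> m\<^sub>\<omega>\<close> with \<open>a\<^sub>\<rho> = exp (ln \<rho> (E\<^sub>1\<^sub>3 + E\<^sub>3\<^sub>1))\<close> and \<open>m\<^sub>\<omega> = diag(\<omega>, \<omega>\<^sup>-\<^sup>2, \<omega>)\<close>.\<close>

definition torus_elt :: "real \<Rightarrow> complex \<Rightarrow> mat3" where
  "torus_elt \<rho> \<omega> = m3 [[(\<rho> + 1/\<rho>)/2 * \<omega>, 0, (\<rho> - 1/\<rho>)/2 * \<omega>],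
                        [0, 1/\<omega>^2, 0],
                        [(\<rho> - 1/\<rho>)/2 * \<omega>, 0, (\<rho> + 1/\<rho>)/2 * \<omega>]]"

lemma torus_elt_in_SU21:
  assumes "\<rho> > 0" "cmod \<omega> = 1"
  shows "torus_elt \<rho> \<omega> \<in> SU21"
proof -
  have \<omega>: "\<omega> \<noteq> 0" "cnj \<omega> = 1 / \<omega>" using assms by (auto simp: divide_conv_cnj)
  have \<rho>: "complex_of_real \<rho> \<noteq> 0" using assms by simp
  have "det (torus_elt \<rho> \<omega>) = 1"
    unfolding det_3 using assms
    by (simp add: torus_elt_def field_simps \<omega> \<rho> power2_eq_square power3_eq_cube)
  moreover have "conj_transpose (torus_elt \<rho> \<omega>) ** Jmat ** torus_elt \<rho> \<omega> = Jmat"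
    apply (rule mat3_eqI)
    apply (auto simp: matrix_mult_mat3_nth torus_elt_def Jmat_def conj_transpose_def \<omega>)
    apply (simp_all add: field_simps \<omega> \<rho> power2_eq_square power3_eq_cube)
    using assms apply (simp_all add: algebra_simps)
    done
  ultimately show ?thesis by (simp add: SU21_def)
qed

lemma torus_elt_normalizes_N:
  assumes "\<rho> > 0" "cmod \<omega> = 1"
  shows "torus_elt \<rho> \<omega> ** nmat b r = nmat (\<rho> * \<omega>^3 * b) (\<rho>^2 * r) ** torus_elt \<rho> \<omega>"
proof -
  have \<omega>: "\<omega> \<noteq> 0" "cnj \<omega> = 1 / \<omega>" using assms by (auto simp: divide_conv_cnj)
  have \<rho>: "complex_of_real \<rho> \<noteq> 0" using assms by simp
  have norm: "(cmod (\<rho> * \<omega>^3 * b))\<^sup>2 = \<rho>\<^sup>2 * (cmod b)\<^sup>2"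
    using assms by (simp add: norm_mult norm_power power_mult_distrib)
  show ?thesis
    apply (rule mat3_eqI)
    apply (auto simp: matrix_mult_mat3_nth torus_elt_def nmat_def norm \<omega>)
    apply (simp_all add: field_simps \<omega> \<rho> power2_eq_square power3_eq_cube)
    using assms apply (simp_all add: algebra_simps)
    done
qed

lemma nonzero_complex_eq_pos_real_mult_unit_cube:
  fixes z :: complex
  assumes "z \<noteq> 0"
  obtains \<rho> \<omega> where "\<rho> > 0" "cmod \<omega> = 1" "complex_of_real \<rho> * \<omega>^3 = z"
proof
  have "cis (Arg z / 3) ^ 3 = cis (real 3 * (Arg z / 3))"
    by (rule Complex.DeMoivre)
  then have "cis (Arg z / 3) ^ 3 = sgn z"
    using cis_Arg[OF assms] by simp
  then show "complex_of_real (cmod z) * cis (Arg z / 3) ^ 3 = z"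
    using assms by (simp add: sgn_div_norm scaleR_conv_of_real)
qed (use assms in auto)

theorem proposition8p2:
  fixes \<beta> \<beta>' :: complex
  assumes "\<beta> \<noteq> 0" and "\<beta>' \<noteq> 0"
  shows "\<exists>\<Phi>. gK_iso \<beta> \<beta>' \<Phi>"
proof -
  define \<mu> where "\<mu> = cnj \<beta>' / cnj \<beta>"
  have "\<mu> \<noteq> 0"
    using assms by (simp add: \<mu>_def)
  then obtain \<rho> \<omega> where \<rho>: "\<rho> > 0" and \<omega>: "cmod \<omega> = 1" and \<mu>: "complex_of_real \<rho> * \<omega>^3 = \<mu>"
    by (rule nonzero_complex_eq_pos_real_mult_unit_cube)
  have "gK_iso \<beta> \<beta>' (ltrans (torus_elt \<rho> \<omega>))"
  proof (rule gK_iso_ltrans)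
    show "torus_elt \<rho> \<omega> \<in> SU21"
      using \<rho> \<omega> by (rule torus_elt_in_SU21)
    show "torus_elt \<rho> \<omega> ** nmat b r = nmat (\<mu> * b) (\<rho>\<^sup>2 * r) ** torus_elt \<rho> \<omega>" for b r
      using torus_elt_normalizes_N[OF \<rho> \<omega>] by (simp add: \<mu>)
    show "cnj \<beta>' = cnj \<beta> * \<mu>"
      using assms by (simp add: \<mu>_def)
  qed (use \<rho> \<open>\<mu> \<noteq> 0\<close> in auto)
  then show ?thesis by blast
qed

end
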